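(* Let $G_1, G_2, \ldots$ be a sequence of ordered graphs, and suppose that either every $G_i$ is irreducible, or every complement $\overline{G_i}$ is irreducible. Let $\mathcal{P}$ be the set of all ordered graphs $G$ such that $G_i$ is not an induced ordered subgraph of $G$ for every $i \in \mathbb{N}$, and let $\mathcal{P}_n$ be the set of members of $\mathcal{P}$ with vertex set $[n]$. Then either $\lim_{n \to \infty} |\mathcal{P}_n|^{1/n}$ exists, or $\liminf_{n \to \infty} |\mathcal{P}_n|^{1/n} = \infty$.
   Context: An ordered graph of order $n$ is a graph on vertex set $[n]$ with the natural order. $G$ is an induced ordered subgraph of $H$ if there is an injective order-preserving map $V(G)\to V(H)$ preserving adjacency and non-adjacency. A pair of vertices $u<v$ of an ordered graph $G$ separates the edges of $G$ if for every edge $ij\in E(G)$ with $i<j$, either $j\leqslant u$ or $v\leqslant i$. $G$ is irreducible if no pair of vertices separates the edges of $G$. *)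

theory Defs
  imports Complex_Main "HOL-Library.Extended_Real" "HOL-Library.Liminf_Limsup"
begin

text \<open>An ordered graph of order n: vertex set {1..n} with the natural order; the edge set
is stored as pairs (i,j) with i < j.\<close>
type_synonym ograph = "nat \<times> (nat \<times> nat) set"

definition ograph_pairs :: "nat \<Rightarrow> (nat \<times> nat) set" where
  "ograph_pairs n = {(i, j). 1 \<le> i \<and> i < j \<and> j \<le> n}"

definition ograph_wf :: "ograph \<Rightarrow> bool" where
  "ograph_wf G \<longleftrightarrow> snd G \<subseteq> ograph_pairs (fst G)"

definition ocomplement :: "ograph \<Rightarrow> ograph" where
  "ocomplement G = (fst G, ograph_pairs (fst G) - snd G)"

definition induced_osub :: "ograph \<Rightarrow> ograph \<Rightarrow> bool" where
  "induced_osub G H \<longleftrightarrow>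
     (\<exists>f. (\<forall>i\<in>{1..fst G}. f i \<in> {1..fst H}) \<and> strict_mono_on {1..fst G} f \<and>
          (\<forall>i j. 1 \<le> i \<longrightarrow> i < j \<longrightarrow> j \<le> fst G \<longrightarrow>
                 ((i, j) \<in> snd G \<longleftrightarrow> (f i, f j) \<in> snd H)))"

definition separates :: "ograph \<Rightarrow> nat \<Rightarrow> nat \<Rightarrow> bool" where
  "separates G u v \<longleftrightarrow> u \<in> {1..fst G} \<and> v \<in> {1..fst G} \<and> u < v \<and>
     (\<forall>(i, j)\<in>snd G. j \<le> u \<or> v \<le> i)"

definition irreducible_og :: "ograph \<Rightarrow> bool" where
  "irreducible_og G \<longleftrightarrow> \<not> (\<exists>u v. separates G u v)"

text \<open>P_n: ordered graphs on [n] containing no G_i as an induced ordered subgraph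
(identified with their edge sets).\<close>
definition forb_n :: "(nat \<Rightarrow> ograph) \<Rightarrow> nat \<Rightarrow> (nat \<times> nat) set set" where
  "forb_n Gs n = {E. ograph_wf (n, E) \<and> (\<forall>i. \<not> induced_osub (Gs i) (n, E))}"

end

(* Suppose every G_i is irreducible. If G_i occurs in the ordered concatenation of two graphs
   on [p] and [q] (no edges between the two parts), the copy lies in one part: otherwise the
   last vertex of G_i mapped into the first part and its successor would separate the edges
   of G_i. So concatenation embeds P_p x P_q into P_(p+q), the numbers |P_n| are
   supermultiplicative, and by Fekete's argument |P_n|^(1/n) tends to its supremum, which may
   be infinite. If some P_n is empty, so are all later ones. Complementation is a bijection
   from P_n onto the class defined by the complements, which reduces the second case to the
   first. *)

theory Submission
  imports Defs
begin

lemma supermultiplicative_power_le: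
  fixes a :: "nat \<Rightarrow> real"
  assumes nonneg: "\<And>n. 0 \<le> a n" and super: "\<And>m n. a m * a n \<le> a (m + n)"
  shows "a m ^ q * a r \<le> a (q * m + r)"
proof (induction q)
  case (Suc q)
  have "a m ^ Suc q * a r = a m * (a m ^ q * a r)" by simp
  also have "\<dots> \<le> a m * a (q * m + r)" using Suc nonneg by (simp add: mult_left_mono)
  also have "\<dots> \<le> a (Suc q * m + r)" using super[of m "q * m + r"] by (simp add: add.assoc)
  finally show ?case .
qed simp

lemma supermultiplicative_root_lower_bound:
  fixes a :: "nat \<Rightarrow> real"
  assumes ge1: "\<And>n. 1 \<le> a n" and super: "\<And>m n. a m * a n \<le> a (m + n)"
    and "1 \<le> m" "m \<le> n"
  shows "root m (a m) powr (1 - m / n) \<le> root n (a n)"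
proof -
  define B where "B = root m (a m)"
  define q where "q = n div m"
  have "B \<ge> 1" using ge1 \<open>1 \<le> m\<close> by (simp add: B_def)
  have "n = m * q + n mod m" by (simp add: q_def)
  moreover have "n mod m < m" using \<open>1 \<le> m\<close> by simp
  ultimately have "n < m * q + m" by linarith
  then have "real n - m \<le> real (m * q)" by linarith
  then have "(real n - m) / n \<le> real (m * q) / n" by (simp add: divide_right_mono)
  then have "1 - m / n \<le> real (m * q) / n"
    using \<open>1 \<le> m\<close> \<open>m \<le> n\<close> by (simp add: diff_divide_distrib)
  then have "B powr (1 - m / n) \<le> B powr (real (m * q) / n)"
    using \<open>B \<ge> 1\<close> by (rule powr_mono)
  also have "\<dots> = root n (B ^ (m * q))"
    using \<open>B \<ge> 1\<close> \<open>1 \<le> m\<close> \<open>m \<le> n\<close> by (simp add: root_powr_inverse powr_realpow [symmetric] powr_powr)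
  also have "B ^ (m * q) = a m ^ q"
    using ge1[of m] \<open>1 \<le> m\<close> by (simp add: B_def power_mult)
  also have "a m ^ q \<le> a n"
  proof -
    have "0 \<le> a m ^ q" using ge1[of m] by simp
    then have "a m ^ q \<le> a m ^ q * a (n mod m)" using mult_left_mono[OF ge1] by fastforce
    also have "\<dots> \<le> a n" using supermultiplicative_power_le[of a m q "n mod m"] ge1 super
      by (simp add: q_def order_trans[OF zero_le_one])
    finally show ?thesis .
  qed
  then have "root n (a m ^ q) \<le> root n (a n)" using \<open>1 \<le> m\<close> \<open>m \<le> n\<close> by simp
  finally show ?thesis unfolding B_def .
qed

lemma supermultiplicative_eventually_root_gt:
  fixes a :: "nat \<Rightarrow> real"
  assumes ge1: "\<And>n. 1 \<le> a n" and super: "\<And>m n. a m * a n \<le> a (m + n)"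
    and "1 \<le> m" and x: "x < root m (a m)"
  shows "\<forall>\<^sub>F n in sequentially. x < root n (a n)"
proof -
  define B where "B = root m (a m)"
  have "B \<ge> 1" using ge1 \<open>1 \<le> m\<close> by (simp add: B_def)
  have "(\<lambda>n. 1 - real m / real n) \<longlonglongrightarrow> 1 - 0"
    by (intro tendsto_intros tendsto_divide_0[OF tendsto_const]
        filterlim_at_top_imp_at_infinity filterlim_real_sequentially)
  then have "(\<lambda>n. B powr (1 - real m / real n)) \<longlonglongrightarrow> B powr (1 - 0)"
    using \<open>B \<ge> 1\<close> by (intro tendsto_powr tendsto_const) auto
  then have "\<forall>\<^sub>F n in sequentially. x < B powr (1 - real m / real n)"
    using x \<open>B \<ge> 1\<close> by (simp add: B_def order_tendstoD(1))
  moreover have "\<forall>\<^sub>F n in sequentially. B powr (1 - real m / real n) \<le> root n (a n)"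
    using eventually_ge_at_top[of m]
  proof eventually_elim
    case (elim n)
    show ?case
      unfolding B_def by (rule supermultiplicative_root_lower_bound[of a, OF ge1 super \<open>1 \<le> m\<close> elim])
  qed
  ultimately show ?thesis by eventually_elim simp
qed

lemma supermultiplicative_root_tendsto_SUP:
  fixes a :: "nat \<Rightarrow> real"
  assumes ge1: "\<And>n. 1 \<le> a n" and super: "\<And>m n. a m * a n \<le> a (m + n)"
  shows "(\<lambda>n. ereal (root n (a n))) \<longlonglongrightarrow> (SUP n\<in>{1..}. ereal (root n (a n)))"
proof (rule order_tendstoI)
  fix y assume "y < (SUP n\<in>{1..}. ereal (root n (a n)))"
  then obtain m where "1 \<le> m" and "y < ereal (root m (a m))" by (auto simp: less_SUP_iff)
  then obtain x where "y < ereal x" and "x < root m (a m)" using ereal_dense2 by force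
  show "\<forall>\<^sub>F n in sequentially. y < ereal (root n (a n))"
    using supermultiplicative_eventually_root_gt[of a, OF ge1 super \<open>1 \<le> m\<close> \<open>x < root m (a m)\<close>]
    by eventually_elim (use \<open>y < ereal x\<close> in \<open>metis less_ereal.simps(1) less_trans\<close>)
next
  fix y assume "(SUP n\<in>{1..}. ereal (root n (a n))) < y"
  show "\<forall>\<^sub>F n in sequentially. ereal (root n (a n)) < y"
    using eventually_ge_at_top[of 1]
  proof eventually_elim
    case (elim n)
    then have "ereal (root n (a n)) \<le> (SUP n\<in>{1..}. ereal (root n (a n)))"
      by (intro SUP_upper) auto
    then show ?case using \<open>(SUP n\<in>{1..}. ereal (root n (a n))) < y\<close> by simp
  qed
qed

lemma supermultiplicative_root_convergent_or_liminf_infinity: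
  fixes a :: "nat \<Rightarrow> real"
  assumes ge1: "\<And>n. 1 \<le> a n" and super: "\<And>m n. a m * a n \<le> a (m + n)"
  shows "convergent (\<lambda>n. root n (a n)) \<or> liminf (\<lambda>n. ereal (root n (a n))) = \<infinity>"
proof -
  define S where "S = (SUP n\<in>{1..}. ereal (root n (a n)))"
  have lim: "(\<lambda>n. ereal (root n (a n))) \<longlonglongrightarrow> S"
    unfolding S_def by (rule supermultiplicative_root_tendsto_SUP[of a, OF ge1 super])
  have "ereal 1 \<le> S" unfolding S_def using ge1[of 1] by (intro SUP_upper2[of 1]) auto
  then consider (finite) s where "S = ereal s" | (infinite) "S = \<infinity>" by (cases S) auto
  then show ?thesis
  proof cases
    case finite
    then show ?thesis using lim by (auto simp: convergent_def)
  next
    case infinite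
    then show ?thesis using lim by (simp add: lim_imp_Liminf)
  qed
qed

definition oembedding :: "ograph \<Rightarrow> ograph \<Rightarrow> (nat \<Rightarrow> nat) \<Rightarrow> bool" where
  "oembedding G H f \<longleftrightarrow>
     (\<forall>i\<in>{1..fst G}. f i \<in> {1..fst H}) \<and> strict_mono_on {1..fst G} f \<and>
     (\<forall>i j. 1 \<le> i \<longrightarrow> i < j \<longrightarrow> j \<le> fst G \<longrightarrow> ((i, j) \<in> snd G \<longleftrightarrow> (f i, f j) \<in> snd H))"

lemma induced_osub_iff_oembedding: "induced_osub G H \<longleftrightarrow> (\<exists>f. oembedding G H f)"
  by (simp add: induced_osub_def oembedding_def)

definition ointerval :: "nat \<Rightarrow> nat \<Rightarrow> ograph \<Rightarrow> ograph" where
  "ointerval a m H = (m, {(i, j). 1 \<le> i \<and> j \<le> m \<and> (i + a, j + a) \<in> snd H})"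

definition oconcat :: "ograph \<Rightarrow> ograph \<Rightarrow> ograph" where
  "oconcat G H = (fst G + fst H, snd G \<union> (\<lambda>(i, j). (i + fst G, j + fst G)) ` snd H)"

lemma ograph_wf_ointerval: "ograph_wf H \<Longrightarrow> ograph_wf (ointerval a m H)"
  by (auto simp: ograph_wf_def ointerval_def ograph_pairs_def)

lemma ograph_wf_oconcat: "ograph_wf G \<Longrightarrow> ograph_wf H \<Longrightarrow> ograph_wf (oconcat G H)"
  by (auto simp: ograph_wf_def oconcat_def ograph_pairs_def)

lemma ograph_wf_ocomplement: "ograph_wf (ocomplement G)"
  by (simp add: ograph_wf_def ocomplement_def)

lemma ointerval_oconcat_left:
  "ograph_wf G \<Longrightarrow> ograph_wf H \<Longrightarrow> ointerval 0 (fst G) (oconcat G H) = G"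
  by (cases G) (auto simp: ograph_wf_def ointerval_def oconcat_def ograph_pairs_def)

lemma ointerval_oconcat_right:
  "ograph_wf G \<Longrightarrow> ograph_wf H \<Longrightarrow> ointerval (fst G) (fst H) (oconcat G H) = H"
  by (cases H) (auto simp: ograph_wf_def ointerval_def oconcat_def ograph_pairs_def)

lemma oconcat_edge_not_crossing:
  "ograph_wf G \<Longrightarrow> ograph_wf H \<Longrightarrow> (i, j) \<in> snd (oconcat G H) \<Longrightarrow> j \<le> fst G \<or> fst G < i"
  by (auto simp: ograph_wf_def oconcat_def ograph_pairs_def)

lemma induced_osub_ointerval_trans:
  assumes "a + m \<le> fst H" and "induced_osub G (ointerval a m H)"
  shows "induced_osub G H"
proof -
  obtain f where f: "oembedding G (ointerval a m H) f"
    using assms(2) by (auto simp: induced_osub_iff_oembedding)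
  have range: "f i \<in> {1..m}" if "i \<in> {1..fst G}" for i
    using f that by (simp add: oembedding_def ointerval_def)
  have "oembedding G H (\<lambda>x. f x + a)"
    unfolding oembedding_def
  proof (intro conjI ballI allI impI)
    show "f i + a \<in> {1..fst H}" if "i \<in> {1..fst G}" for i
      using range[OF that] assms(1) by auto
    show "strict_mono_on {1..fst G} (\<lambda>x. f x + a)"
      using f by (auto simp: oembedding_def strict_mono_on_def)
    fix i j assume ij: "1 \<le> i" "i < j" "j \<le> fst G"
    then have "1 \<le> f i" "f j \<le> m" using range by auto
    then show "(i, j) \<in> snd G \<longleftrightarrow> (f i + a, f j + a) \<in> snd H"
      using f ij by (auto simp: oembedding_def ointerval_def)
  qed
  then show ?thesis by (auto simp: induced_osub_iff_oembedding)
qed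

lemma induced_osub_ointervalI:
  assumes f: "oembedding G H f" and range: "f ` {1..fst G} \<subseteq> {a<..a + m}"
  shows "induced_osub G (ointerval a m H)"
proof -
  have inr: "a < f i" "f i \<le> a + m" if "i \<in> {1..fst G}" for i
    using range that unfolding image_subset_iff by auto
  have "oembedding G (ointerval a m H) (\<lambda>x. f x - a)"
    unfolding oembedding_def
  proof (intro conjI ballI allI impI)
    show "f i - a \<in> {1..fst (ointerval a m H)}" if "i \<in> {1..fst G}" for i
      using inr[OF that] by (auto simp: ointerval_def)
    show "strict_mono_on {1..fst G} (\<lambda>x. f x - a)"
      using f inr unfolding oembedding_def strict_mono_on_def by (metis diff_less_mono less_imp_le)
    fix i j assume ij: "1 \<le> i" "i < j" "j \<le> fst G"
    then have "a < f i" "f i \<le> a + m" "a < f j" "f j \<le> a + m" using inr by auto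
    then show "(i, j) \<in> snd G \<longleftrightarrow> (f i - a, f j - a) \<in> snd (ointerval a m H)"
      using f ij by (auto simp: oembedding_def ointerval_def)
  qed
  then show ?thesis by (auto simp: induced_osub_iff_oembedding)
qed

lemma oembedding_straddling_cut_not_irreducible:
  assumes wf: "ograph_wf G" and f: "oembedding G H f"
    and cut: "\<And>i j. (i, j) \<in> snd H \<Longrightarrow> j \<le> p \<or> p < i"
    and x: "x \<in> {1..fst G}" "f x \<le> p" and y: "y \<in> {1..fst G}" "p < f y"
  shows "\<not> irreducible_og G"
proof -
  have mono: "strict_mono_on {1..fst G} f" using f by (simp add: oembedding_def)
  \<comment> \<open>An edge of \<open>G\<close> jumping over the last vertex mapped below the cut would be mapped across it.\<close>
  define t where "t = Max {z \<in> {1..fst G}. f z \<le> p}"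
  have below_t: "z \<le> t" if "z \<in> {1..fst G}" "f z \<le> p" for z
    using that by (simp add: t_def)
  have "t \<in> {z \<in> {1..fst G}. f z \<le> p}"
    unfolding t_def using x by (intro Max_in) auto
  then have t: "t \<in> {1..fst G}" "f t \<le> p" by auto
  have "t < y"
  proof (rule ccontr)
    assume "\<not> t < y"
    then have "f y \<le> f t" using strict_mono_on_leD[OF mono y(1) t(1)] by simp
    with t(2) y(2) show False by simp
  qed
  have "j \<le> t \<or> t + 1 \<le> i" if "(i, j) \<in> snd G" for i j
  proof (rule ccontr)
    assume "\<not> (j \<le> t \<or> t + 1 \<le> i)"
    then have "i \<le> t" "\<not> j \<le> t" by auto
    have ij: "1 \<le> i" "i < j" "j \<le> fst G"
      using wf that by (auto simp: ograph_wf_def ograph_pairs_def)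
    have "f i \<le> p" using strict_mono_on_leD[OF mono _ t(1) \<open>i \<le> t\<close>] ij t(1,2) by auto
    moreover have "p < f j" using below_t[of j] ij \<open>\<not> j \<le> t\<close> by fastforce
    moreover have "(f i, f j) \<in> snd H" using f ij that by (simp add: oembedding_def)
    ultimately show False using cut by fastforce
  qed
  then have "separates G t (t + 1)"
    using t(1) \<open>t < y\<close> y(1) by (auto simp: separates_def)
  then show ?thesis by (auto simp: irreducible_og_def)
qed

lemma induced_osub_oconcat_irreducible:
  assumes "ograph_wf G" "irreducible_og G" "ograph_wf H1" "ograph_wf H2"
    and "induced_osub G (oconcat H1 H2)"
  shows "induced_osub G H1 \<or> induced_osub G H2"
proof -
  obtain f where f: "oembedding G (oconcat H1 H2) f"
    using assms(5) by (auto simp: induced_osub_iff_oembedding)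
  have range: "f x \<in> {1..fst H1 + fst H2}" if "x \<in> {1..fst G}" for x
    using f that by (simp add: oembedding_def oconcat_def)
  consider (left) "\<forall>x\<in>{1..fst G}. f x \<le> fst H1" | (right) "\<forall>x\<in>{1..fst G}. fst H1 < f x"
    | (straddle) x y where "x \<in> {1..fst G}" "f x \<le> fst H1" "y \<in> {1..fst G}" "fst H1 < f y"
    using not_le by blast
  then show ?thesis
  proof cases
    case left
    then have "f ` {1..fst G} \<subseteq> {0<..0 + fst H1}" using range by fastforce
    then have "induced_osub G (ointerval 0 (fst H1) (oconcat H1 H2))"
      by (rule induced_osub_ointervalI[OF f])
    then show ?thesis using ointerval_oconcat_left[OF assms(3,4)] by simp
  next
    case right
    then have "f ` {1..fst G} \<subseteq> {fst H1<..fst H1 + fst H2}" using range by fastforce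
    then have "induced_osub G (ointerval (fst H1) (fst H2) (oconcat H1 H2))"
      by (rule induced_osub_ointervalI[OF f])
    then show ?thesis using ointerval_oconcat_right[OF assms(3,4)] by simp
  next
    case straddle
    with oembedding_straddling_cut_not_irreducible[OF assms(1) f
        oconcat_edge_not_crossing[OF assms(3,4)]]
    have "\<not> irreducible_og G" by blast
    with assms(2) show ?thesis by contradiction
  qed
qed

lemma oembedding_ocomplement_iff:
  "oembedding (ocomplement G) (ocomplement H) f \<longleftrightarrow> oembedding G H f"
  by (auto simp: oembedding_def ocomplement_def ograph_pairs_def strict_mono_on_def)

lemma induced_osub_ocomplement_iff:
  "induced_osub (ocomplement G) (ocomplement H) \<longleftrightarrow> induced_osub G H"
  by (simp add: induced_osub_iff_oembedding oembedding_ocomplement_iff)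

lemma finite_forb_n: "finite (forb_n Gs n)"
proof -
  have "ograph_pairs n \<subseteq> {1..n} \<times> {1..n}" by (auto simp: ograph_pairs_def)
  then have "finite (ograph_pairs n)" by (rule finite_subset) simp
  moreover have "forb_n Gs n \<subseteq> Pow (ograph_pairs n)" by (auto simp: forb_n_def ograph_wf_def)
  ultimately show ?thesis by (meson finite_Pow_iff finite_subset)
qed

lemma ointerval_in_forb_n:
  assumes E: "E \<in> forb_n Gs m" and "a + n \<le> m"
  shows "snd (ointerval a n (m, E)) \<in> forb_n Gs n"
proof -
  have "ograph_wf (ointerval a n (m, E))"
    using E by (intro ograph_wf_ointerval) (simp add: forb_n_def)
  moreover have "\<not> induced_osub (Gs i) (ointerval a n (m, E))" for i
    using induced_osub_ointerval_trans[of a n "(m, E)" "Gs i"] assms by (auto simp: forb_n_def)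
  ultimately show ?thesis by (simp add: forb_n_def ointerval_def)
qed

lemma forb_n_empty_mono:
  assumes "forb_n Gs m = {}" and "m \<le> n"
  shows "forb_n Gs n = {}"
proof (rule equals0I)
  fix E assume "E \<in> forb_n Gs n"
  from ointerval_in_forb_n[OF this, of 0 m] assms show False by simp
qed

lemma oconcat_in_forb_n:
  assumes wf: "\<And>i. ograph_wf (Gs i)" and irr: "\<And>i. irreducible_og (Gs i)"
    and E1: "E1 \<in> forb_n Gs p" and E2: "E2 \<in> forb_n Gs q"
  shows "snd (oconcat (p, E1) (q, E2)) \<in> forb_n Gs (p + q)"
proof -
  have wf12: "ograph_wf (p, E1)" "ograph_wf (q, E2)" using E1 E2 by (simp_all add: forb_n_def)
  obtain E where H: "oconcat (p, E1) (q, E2) = (p + q, E)" by (simp add: oconcat_def)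
  have "\<not> induced_osub (Gs i) (p + q, E)" for i
    using induced_osub_oconcat_irreducible[OF wf irr wf12] E1 E2 by (auto simp: forb_n_def H)
  with ograph_wf_oconcat[OF wf12] show ?thesis by (simp add: forb_n_def H)
qed

lemma card_forb_n_supermultiplicative:
  assumes "\<And>i. ograph_wf (Gs i)" and "\<And>i. irreducible_og (Gs i)"
  shows "card (forb_n Gs p) * card (forb_n Gs q) \<le> card (forb_n Gs (p + q))"
proof -
  let ?glue = "\<lambda>(E1, E2). snd (oconcat (p, E1) (q, E2))"
  have "inj_on ?glue (forb_n Gs p \<times> forb_n Gs q)"
  proof (rule inj_onI, clarify)
    fix E1 E2 E1' E2'
    assume "E1 \<in> forb_n Gs p" "E2 \<in> forb_n Gs q" "E1' \<in> forb_n Gs p" "E2' \<in> forb_n Gs q"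
    then have wf: "ograph_wf (p, E1)" "ograph_wf (q, E2)" "ograph_wf (p, E1')" "ograph_wf (q, E2')"
      by (simp_all add: forb_n_def)
    assume "snd (oconcat (p, E1) (q, E2)) = snd (oconcat (p, E1') (q, E2'))"
    then have eq: "oconcat (p, E1) (q, E2) = oconcat (p, E1') (q, E2')"
      by (simp add: prod_eq_iff oconcat_def)
    have "(p, E1) = ointerval 0 (fst (p, E1)) (oconcat (p, E1) (q, E2))"
      by (rule ointerval_oconcat_left[OF wf(1,2), symmetric])
    also have "\<dots> = ointerval 0 (fst (p, E1')) (oconcat (p, E1') (q, E2'))"
      by (simp add: eq)
    also have "\<dots> = (p, E1')" by (rule ointerval_oconcat_left[OF wf(3,4)])
    finally have "E1 = E1'" by simp
    have "(q, E2) = ointerval (fst (p, E1)) (fst (q, E2)) (oconcat (p, E1) (q, E2))"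
      by (rule ointerval_oconcat_right[OF wf(1,2), symmetric])
    also have "\<dots> = ointerval (fst (p, E1')) (fst (q, E2')) (oconcat (p, E1') (q, E2'))"
      by (simp add: eq)
    also have "\<dots> = (q, E2')" by (rule ointerval_oconcat_right[OF wf(3,4)])
    finally show "E1 = E1' \<and> E2 = E2'" using \<open>E1 = E1'\<close> by simp
  qed
  moreover have "?glue ` (forb_n Gs p \<times> forb_n Gs q) \<subseteq> forb_n Gs (p + q)"
    using oconcat_in_forb_n[OF assms] by auto
  ultimately have "card (forb_n Gs p \<times> forb_n Gs q) \<le> card (forb_n Gs (p + q))"
    using finite_forb_n by (intro card_inj_on_le) auto
  then show ?thesis by (simp add: card_cartesian_product)
qed

lemma ocomplement_in_forb_n_iff:
  assumes "E \<subseteq> ograph_pairs n"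
  shows "ograph_pairs n - E \<in> forb_n (\<lambda>i. ocomplement (Gs i)) n \<longleftrightarrow> E \<in> forb_n Gs n"
proof -
  have "(n, ograph_pairs n - E) = ocomplement (n, E)" by (simp add: ocomplement_def)
  then show ?thesis
    using assms by (simp add: forb_n_def ograph_wf_def induced_osub_ocomplement_iff)
qed

lemma card_forb_n_ocomplement:
  "card (forb_n (\<lambda>i. ocomplement (Gs i)) n) = card (forb_n Gs n)"
proof -
  have sub: "E \<subseteq> ograph_pairs n" if "E \<in> forb_n Gs' n" for E and Gs' :: "nat \<Rightarrow> ograph"
    using that by (simp add: forb_n_def ograph_wf_def)
  have "bij_betw (\<lambda>E. ograph_pairs n - E) (forb_n Gs n) (forb_n (\<lambda>i. ocomplement (Gs i)) n)"
  proof (rule bij_betw_byWitness[where f' = "\<lambda>E. ograph_pairs n - E"])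
    show "\<forall>E\<in>forb_n Gs n. ograph_pairs n - (ograph_pairs n - E) = E"
      "\<forall>E\<in>forb_n (\<lambda>i. ocomplement (Gs i)) n. ograph_pairs n - (ograph_pairs n - E) = E"
      using sub by auto
    show "(\<lambda>E. ograph_pairs n - E) ` forb_n Gs n \<subseteq> forb_n (\<lambda>i. ocomplement (Gs i)) n"
      using sub ocomplement_in_forb_n_iff by blast
    show "(\<lambda>E. ograph_pairs n - E) ` forb_n (\<lambda>i. ocomplement (Gs i)) n \<subseteq> forb_n Gs n"
    proof (rule image_subsetI)
      fix E assume "E \<in> forb_n (\<lambda>i. ocomplement (Gs i)) n"
      then have "ograph_pairs n - (ograph_pairs n - E) \<in> forb_n (\<lambda>i. ocomplement (Gs i)) n"
        using sub by (simp add: Diff_Diff_Int Int_absorb1)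
      then show "ograph_pairs n - E \<in> forb_n Gs n"
        using ocomplement_in_forb_n_iff[of "ograph_pairs n - E" n Gs] by blast
    qed
  qed
  then show ?thesis by (simp add: bij_betw_same_card)
qed

lemma root_card_forb_n_convergent_or_liminf_infinity:
  assumes wf: "\<And>i. ograph_wf (Gs i)" and irr: "\<And>i. irreducible_og (Gs i)"
  shows "convergent (\<lambda>n. root n (real (card (forb_n Gs n))))
         \<or> liminf (\<lambda>n. ereal (root n (real (card (forb_n Gs n))))) = \<infinity>"
proof (cases "\<forall>n. forb_n Gs n \<noteq> {}")
  case True
  then have "1 \<le> real (card (forb_n Gs n))" for n
    using finite_forb_n[of Gs n] by (simp add: Suc_le_eq card_gt_0_iff)
  moreover have "real (card (forb_n Gs m)) * real (card (forb_n Gs n)) \<le> real (card (forb_n Gs (m + n)))"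
    for m n
    using card_forb_n_supermultiplicative[of Gs m n, OF wf irr] by (simp flip: of_nat_mult)
  ultimately show ?thesis by (rule supermultiplicative_root_convergent_or_liminf_infinity)
next
  case False
  then obtain m where empty: "forb_n Gs m = {}" by blast
  have "\<forall>\<^sub>F n in sequentially. root n (real (card (forb_n Gs n))) = 0"
    using eventually_ge_at_top[of m] by eventually_elim (simp add: forb_n_empty_mono[OF empty])
  then have "(\<lambda>n. root n (real (card (forb_n Gs n)))) \<longlonglongrightarrow> 0"
    by (rule tendsto_eventually)
  then show ?thesis by (auto simp: convergent_def)
qed

theorem theorem30:
  fixes Gs :: "nat \<Rightarrow> ograph"
  assumes wf: "\<forall>i. ograph_wf (Gs i)"
    and irr: "(\<forall>i. irreducible_og (Gs i)) \<or> (\<forall>i. irreducible_og (ocomplement (Gs i)))"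
  shows "convergent (\<lambda>n. root n (real (card (forb_n Gs n))))
         \<or> liminf (\<lambda>n. ereal (root n (real (card (forb_n Gs n))))) = \<infinity>"
  using irr
proof
  assume "\<forall>i. irreducible_og (Gs i)"
  with wf show ?thesis by (intro root_card_forb_n_convergent_or_liminf_infinity) auto
next
  assume "\<forall>i. irreducible_og (ocomplement (Gs i))"
  then have "convergent (\<lambda>n. root n (real (card (forb_n (\<lambda>i. ocomplement (Gs i)) n))))
      \<or> liminf (\<lambda>n. ereal (root n (real (card (forb_n (\<lambda>i. ocomplement (Gs i)) n))))) = \<infinity>"
    by (intro root_card_forb_n_convergent_or_liminf_infinity ograph_wf_ocomplement) auto
  then show ?thesis by (simp only: card_forb_n_ocomplement)
qed

end
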